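(* Let $m\ge 1$ and consider $4m$ bits grouped into $m$ disjoint blocks of four bits each; index the bits of each block by $1,2,3,4$. Fix $\alpha\in\{2,3\}$ and set $A=\{1,\alpha\}$, $B=\{1,2,3,4\}\setminus A$. Let $(u,v)\in\{0,1\}^{4m}\times\{0,1\}^{4m}$ be random, where $u$ is the error vector and $v$ the flag vector, and suppose the distribution of $(u,v)$ is quasi-independent with strength $\{f^{(\rm in)},\delta_f^{(\rm in)},\delta_{\neg f}^{(\rm in)}\}$. For each block, with restrictions $u=(u_1,\dots,u_4)$, $v=(v_1,\dots,v_4)$ to that block, define the syndrome $s=u_1\oplus u_2\oplus u_3\oplus u_4$, the flagged set $F=\{i: v_i=1\}$, and the correction vector $c\in\{0,1\}^4$ by: $c=0$ if $s=0$; $c=e_1$ if $s=1$ and $F=\emptyset$; $c=e_{\min F}$ if $s=1$ and $F\neq\emptyset$ (here $e_i$ is the $i$-th unit vector). The block's output error bit is $U=\bigoplus_{i\in A}(u_i\oplus c_i)$ (the block has a decoding error iff $U=1$). The block's output flag bit $V$ is: $V=s$ if $|F|=0$; $V=0$ if $|F|=1$; and if $|F|\ge 2$, $V=1$ iff $F\cap A\neq\emptyset$ and $F\cap B\neq\emptyset$. Then the distribution of the $m$ pairs $(U,V)$ (one per block, i.e. the blocks viewed as $m$ bits with errors $U$ and flags $V$) is quasi-independent with strength $\{f^{(\rm out)},\delta_f^{(\rm out)},\delta_{\neg f}^{(\rm out)}\}$, where $$f^{(\rm out)}=4\delta_{\neg f}^{(\rm in)}+4\big(f^{(\rm in)}\big)^2,$$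 $$\delta_f^{(\rm out)}=2\delta_{\neg f}^{(\rm in)}+4f^{(\rm in)}\delta_f^{(\rm in)}+4\big(f^{(\rm in)}\big)^2\big(2\delta_{\neg f}^{(\rm in)}+3\delta_f^{(\rm in)}\big),$$ $$\delta_{\neg f}^{(\rm out)}=4\big(\delta_{\neg f}^{(\rm in)}\big)^2+8f^{(\rm in)}\delta_{\neg f}^{(\rm in)}.$$
   Context: Quasi-independent errors: Let $P(u,v)$ be a probability distribution on $\{0,1\}^n\times\{0,1\}^n$ for a set $\mathcal I$ of $n$ bits, where $u_i=1$ means bit $i$ has an error and $v_i=1$ means bit $i$ is flagged. $P$ is quasi-independent with strength $\{f,\delta_f,\delta_{\neg f}\}$ if for every pair of disjoint subsets $\mathcal J,\mathcal K\subseteq\mathcal I$ with $|\mathcal J|=r$, $|\mathcal K|=s$, and every subset $\mathcal L\subseteq\mathcal K$ with $|\mathcal L|=t$, the probability of the event "every bit in $\mathcal J$ is unflagged and has an error, every bit in $\mathcal K$ is flagged, and every bit in $\mathcal L$ has an error" is at most $(\delta_{\neg f})^r(\delta_f)^t f^{\,s-t}$. Interpretation: the four bits are the transversal measurement outcomes of a block of the 4-qubit code with stabilizers $\sigma_z^{\otimes4},\sigma_x^{\otimes4}$; $\alpha=3$ corresponds to decoding the logical $\sigma_z^L=\sigma_z\otimes I\otimes\sigma_z\otimes I$ and $\alpha=2$ to decoding $\sigma_x^L=\sigma_x\otimes\sigma_x\otimes I\otimes I$, and an error means the measured bit differs from the ideal one. *)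

theory Defs
  imports "HOL-Probability.Probability"
begin

text \<open>Bits are indexed by elements of type 'i; only bits in I matter.
  u i = True means bit i has an error, v i = True means bit i is flagged.\<close>
definition quasi_indep ::
  "'i set \<Rightarrow> (('i \<Rightarrow> bool) \<times> ('i \<Rightarrow> bool)) pmf \<Rightarrow> real \<Rightarrow> real \<Rightarrow> real \<Rightarrow> bool" where
  "quasi_indep I P f df dnf \<longleftrightarrow>
     (\<forall>J K L. J \<subseteq> I \<and> K \<subseteq> I \<and> J \<inter> K = {} \<and> L \<subseteq> K \<longrightarrow>
        measure_pmf.prob P
          {(u, v). (\<forall>i\<in>J. \<not> v i \<and> u i) \<and> (\<forall>i\<in>K. v i) \<and> (\<forall>i\<in>L. u i)}
        \<le> dnf ^ card J * df ^ card L * f ^ (card K - card L))"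

definition blk_syn :: "(nat \<Rightarrow> bool) \<Rightarrow> bool" where
  "blk_syn u \<longleftrightarrow> odd (card {i \<in> {1..4::nat}. u i})"

definition blk_flags :: "(nat \<Rightarrow> bool) \<Rightarrow> nat set" where
  "blk_flags v = {i \<in> {1..4::nat}. v i}"

definition blk_corr :: "(nat \<Rightarrow> bool) \<Rightarrow> (nat \<Rightarrow> bool) \<Rightarrow> nat \<Rightarrow> bool" where
  "blk_corr u v =
     (if \<not> blk_syn u then (\<lambda>_. False)
      else if blk_flags v = {} then (\<lambda>i. i = 1)
      else (\<lambda>i. i = Min (blk_flags v)))"

definition blk_U :: "nat \<Rightarrow> (nat \<Rightarrow> bool) \<Rightarrow> (nat \<Rightarrow> bool) \<Rightarrow> bool" where
  "blk_U \<alpha> u v \<longleftrightarrow> odd (card {i \<in> {1, \<alpha>}. u i \<noteq> blk_corr u v i})"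

definition blk_V :: "nat \<Rightarrow> (nat \<Rightarrow> bool) \<Rightarrow> (nat \<Rightarrow> bool) \<Rightarrow> bool" where
  "blk_V \<alpha> u v =
     (let F = blk_flags v; A = {1, \<alpha>}; B = {1..4} - {1, \<alpha>} in
      if card F = 0 then blk_syn u
      else if card F = 1 then False
      else (F \<inter> A \<noteq> {} \<and> F \<inter> B \<noteq> {}))"

text \<open>The 4m input bits are indexed by pairs (j, k): block j < m, position k in {1..4}.
  The output distribution of the m block pairs (U, V).\<close>
definition out_pmf ::
  "nat \<Rightarrow> ((nat \<times> nat \<Rightarrow> bool) \<times> (nat \<times> nat \<Rightarrow> bool)) pmf \<Rightarrow> ((nat \<Rightarrow> bool) \<times> (nat \<Rightarrow> bool)) pmf" where
  "out_pmf \<alpha> P = map_pmf (\<lambda>(u, v).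
      ((\<lambda>j. blk_U \<alpha> (\<lambda>k. u (j, k)) (\<lambda>k. v (j, k))),
       (\<lambda>j. blk_V \<alpha> (\<lambda>k. u (j, k)) (\<lambda>k. v (j, k))))) P"

end

theory Submission
  imports Defs
begin

text \<open>On a single block, each of the three output
  conditions (error without flag, flag, flag with error) forces the block's input to contain one of
  a few local patterns of unflagged errors, flags and flagged errors. Choosing one pattern per block
  yields an input event of the shape controlled by quasi-independence, and its bound factorizes over
  the blocks. A union bound over all choices therefore bounds the output probability by a product,
  over the blocks, of the summed bounds of the patterns, and these sums are the output parameters
  (for \<open>\<alpha> = 3\<close> the flagged-error sum is \<open>2 dnf + 4 f df + f\<^sup>2 dnf\<close>, below the stated value).\<close>

type_synonym 'i pattern = "'i set \<times> 'i set \<times> 'i set"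

definition pattern_event :: "'i pattern \<Rightarrow> (('i \<Rightarrow> bool) \<times> ('i \<Rightarrow> bool)) set" where
  "pattern_event = (\<lambda>(J, K, L). {(u, v). (\<forall>i\<in>J. \<not> v i \<and> u i) \<and> (\<forall>i\<in>K. v i) \<and> (\<forall>i\<in>L. u i)})"

definition pattern_bound :: "real \<Rightarrow> real \<Rightarrow> real \<Rightarrow> 'i pattern \<Rightarrow> real" where
  "pattern_bound f df dnf = (\<lambda>(J, K, L). dnf ^ card J * df ^ card L * f ^ (card K - card L))"

definition admissible_pattern :: "'i set \<Rightarrow> 'i pattern \<Rightarrow> bool" where
  "admissible_pattern I = (\<lambda>(J, K, L). J \<subseteq> I \<and> K \<subseteq> I \<and> J \<inter> K = {} \<and> L \<subseteq> K)"

lemma quasi_indep_iff: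
  "quasi_indep I P f df dnf \<longleftrightarrow>
     (\<forall>p. admissible_pattern I p \<longrightarrow> measure_pmf.prob P (pattern_event p) \<le> pattern_bound f df dnf p)"
  by (auto simp: quasi_indep_def pattern_event_def pattern_bound_def admissible_pattern_def)

lemma quasi_indep_nonneg:
  assumes qi: "quasi_indep I P f df dnf" and "i \<in> I"
  shows "0 \<le> f" and "0 \<le> df" and "0 \<le> dnf"
proof -
  have "0 \<le> pattern_bound f df dnf p" if "admissible_pattern I p" for p
    using qi that unfolding quasi_indep_iff by (meson measure_nonneg order_trans)
  from this[of "({}, {i}, {})"] this[of "({}, {i}, {i})"] this[of "({i}, {}, {})"]
  show "0 \<le> f" and "0 \<le> df" and "0 \<le> dnf"
    using \<open>i \<in> I\<close> by (simp_all add: admissible_pattern_def pattern_bound_def)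
qed

lemma pattern_bound_nonneg:
  "0 \<le> f \<Longrightarrow> 0 \<le> df \<Longrightarrow> 0 \<le> dnf \<Longrightarrow> 0 \<le> pattern_bound f df dnf p"
  by (auto simp: pattern_bound_def split: prod.split)

lemma pattern_bound_mono:
  assumes "0 \<le> f" "0 \<le> df" "0 \<le> dnf" "f \<le> f'" "df \<le> df'" "dnf \<le> dnf'"
  shows "pattern_bound f df dnf p \<le> pattern_bound f' df' dnf' p"
  using assms by (auto simp: pattern_bound_def split: prod.split intro!: mult_mono power_mono)

lemma quasi_indep_mono:
  assumes "quasi_indep I P f df dnf" "0 \<le> f" "0 \<le> df" "0 \<le> dnf"
    and "f \<le> f'" "df \<le> df'" "dnf \<le> dnf'"
  shows "quasi_indep I P f' df' dnf'"
  using assms pattern_bound_mono[of f df dnf f' df' dnf'] unfolding quasi_indep_iff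
  by (meson order_trans)

definition block_restr ::
  "'j \<Rightarrow> ('j \<times> 'k \<Rightarrow> bool) \<times> ('j \<times> 'k \<Rightarrow> bool) \<Rightarrow> ('k \<Rightarrow> bool) \<times> ('k \<Rightarrow> bool)" where
  "block_restr j = (\<lambda>(u, v). (\<lambda>k. u (j, k), \<lambda>k. v (j, k)))"

definition pattern_Sigma :: "'j set \<Rightarrow> ('j \<Rightarrow> 'k pattern) \<Rightarrow> ('j \<times> 'k) pattern" where
  "pattern_Sigma T \<sigma> =
     (SIGMA j:T. fst (\<sigma> j), SIGMA j:T. fst (snd (\<sigma> j)), SIGMA j:T. snd (snd (\<sigma> j)))"

lemma pattern_event_iff:
  "(u, v) \<in> pattern_event p \<longleftrightarrow>
     (\<forall>i\<in>fst p. \<not> v i \<and> u i) \<and> (\<forall>i\<in>fst (snd p). v i) \<and> (\<forall>i\<in>snd (snd p). u i)"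
  by (cases p) (simp add: pattern_event_def)

lemma pattern_event_Sigma:
  "w \<in> pattern_event (pattern_Sigma T \<sigma>) \<longleftrightarrow> (\<forall>j\<in>T. block_restr j w \<in> pattern_event (\<sigma> j))"
  by (cases w) (simp add: pattern_event_iff pattern_Sigma_def block_restr_def, blast)

lemma admissible_pattern_iff:
  "admissible_pattern I p \<longleftrightarrow>
     fst p \<subseteq> I \<and> fst (snd p) \<subseteq> I \<and> fst p \<inter> fst (snd p) = {} \<and> snd (snd p) \<subseteq> fst (snd p)"
  by (cases p) (simp add: admissible_pattern_def)

lemma admissible_pattern_Sigma:
  "T \<subseteq> S \<Longrightarrow> (\<forall>j\<in>T. admissible_pattern Q (\<sigma> j)) \<Longrightarrow>
     admissible_pattern (S \<times> Q) (pattern_Sigma T \<sigma>)"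
  by (auto simp: admissible_pattern_iff pattern_Sigma_def)

lemma pattern_bound_Sigma:
  assumes "finite T" "finite Q" "\<forall>j\<in>T. admissible_pattern Q (\<sigma> j)"
  shows "pattern_bound f df dnf (pattern_Sigma T \<sigma>) = (\<Prod>j\<in>T. pattern_bound f df dnf (\<sigma> j))"
proof -
  define a where "a j = fst (\<sigma> j)" for j
  define b where "b j = fst (snd (\<sigma> j))" for j
  define c where "c j = snd (snd (\<sigma> j))" for j
  have \<sigma>: "\<sigma> j = (a j, b j, c j)" for j by (simp add: a_def b_def c_def)
  have sub: "a j \<subseteq> Q" "b j \<subseteq> Q" "c j \<subseteq> b j" if "j \<in> T" for j
    using assms(3) that unfolding admissible_pattern_def \<sigma> by auto
  then have fin: "finite (a j)" "finite (b j)" "finite (c j)" if "j \<in> T" for j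
    using that assms(2) by (meson finite_subset)+
  have card_diff:
    "(\<Sum>j\<in>T. card (b j)) - (\<Sum>j\<in>T. card (c j)) = (\<Sum>j\<in>T. card (b j) - card (c j))"
    using assms(1) fin sub by (simp add: sum_subtractf_nat card_mono)
  have "pattern_Sigma T \<sigma> = (SIGMA j:T. a j, SIGMA j:T. b j, SIGMA j:T. c j)"
    by (simp add: pattern_Sigma_def a_def b_def c_def)
  then have "pattern_bound f df dnf (pattern_Sigma T \<sigma>)
      = dnf ^ (\<Sum>j\<in>T. card (a j)) * df ^ (\<Sum>j\<in>T. card (c j))
          * f ^ (\<Sum>j\<in>T. card (b j) - card (c j))"
    using assms(1) fin by (simp add: pattern_bound_def card_diff)
  also have "\<dots> = (\<Prod>j\<in>T. dnf ^ card (a j) * df ^ card (c j) * f ^ (card (b j) - card (c j)))"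
    by (simp only: power_sum prod.distrib)
  finally show ?thesis by (simp add: pattern_bound_def \<sigma>)
qed

lemma prob_blockwise_patterns_le:
  fixes P :: "(('j \<times> 'k \<Rightarrow> bool) \<times> ('j \<times> 'k \<Rightarrow> bool)) pmf"
  assumes qi: "quasi_indep (S \<times> Q) P f df dnf"
    and "finite T" "T \<subseteq> S" "finite Q"
    and E_finite: "\<And>j. j \<in> T \<Longrightarrow> finite (E j)"
    and E_admissible: "\<And>j p. j \<in> T \<Longrightarrow> p \<in> E j \<Longrightarrow> admissible_pattern Q p"
  shows "measure_pmf.prob P {w. \<forall>j\<in>T. \<exists>p\<in>E j. block_restr j w \<in> pattern_event p}
           \<le> (\<Prod>j\<in>T. \<Sum>p\<in>E j. pattern_bound f df dnf p)"
proof -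
  have fin_PiE: "finite (PiE T E)"
    using assms(2) E_finite by (rule finite_PiE)
  have "{w. \<forall>j\<in>T. \<exists>p\<in>E j. block_restr j w \<in> pattern_event p}
          \<subseteq> (\<Union>\<sigma>\<in>PiE T E. pattern_event (pattern_Sigma T \<sigma>))"
  proof
    fix w assume "w \<in> {w. \<forall>j\<in>T. \<exists>p\<in>E j. block_restr j w \<in> pattern_event p}"
    then obtain \<sigma> where \<sigma>: "\<forall>j\<in>T. \<sigma> j \<in> E j \<and> block_restr j w \<in> pattern_event (\<sigma> j)"
      using bchoice[of T "\<lambda>j p. p \<in> E j \<and> block_restr j w \<in> pattern_event p"] by blast
    then have "restrict \<sigma> T \<in> PiE T E" "w \<in> pattern_event (pattern_Sigma T (restrict \<sigma> T))"
      by (auto simp: pattern_event_Sigma)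
    then show "w \<in> (\<Union>\<sigma>\<in>PiE T E. pattern_event (pattern_Sigma T \<sigma>))" by blast
  qed
  then have "measure_pmf.prob P {w. \<forall>j\<in>T. \<exists>p\<in>E j. block_restr j w \<in> pattern_event p}
          \<le> measure_pmf.prob P (\<Union>\<sigma>\<in>PiE T E. pattern_event (pattern_Sigma T \<sigma>))"
    by (rule measure_pmf.finite_measure_mono) simp
  also have "\<dots> \<le> (\<Sum>\<sigma>\<in>PiE T E. measure_pmf.prob P (pattern_event (pattern_Sigma T \<sigma>)))"
    using fin_PiE by (rule measure_pmf.finite_measure_subadditive_finite) simp
  also have "\<dots> \<le> (\<Sum>\<sigma>\<in>PiE T E. \<Prod>j\<in>T. pattern_bound f df dnf (\<sigma> j))"
  proof (rule sum_mono)
    fix \<sigma> assume "\<sigma> \<in> PiE T E"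
    then have adm: "\<forall>j\<in>T. admissible_pattern Q (\<sigma> j)" using E_admissible by blast
    then have "admissible_pattern (S \<times> Q) (pattern_Sigma T \<sigma>)"
      using \<open>T \<subseteq> S\<close> by (rule admissible_pattern_Sigma[rotated])
    then have "measure_pmf.prob P (pattern_event (pattern_Sigma T \<sigma>))
        \<le> pattern_bound f df dnf (pattern_Sigma T \<sigma>)"
      using qi unfolding quasi_indep_iff by blast
    also have "\<dots> = (\<Prod>j\<in>T. pattern_bound f df dnf (\<sigma> j))"
      using \<open>finite T\<close> \<open>finite Q\<close> adm by (rule pattern_bound_Sigma)
    finally show "measure_pmf.prob P (pattern_event (pattern_Sigma T \<sigma>)) \<le> \<dots>" .
  qed
  also have "\<dots> = (\<Prod>j\<in>T. \<Sum>p\<in>E j. pattern_bound f df dnf p)"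
    using \<open>finite T\<close> E_finite by (rule prod_sum_PiE[symmetric])
  finally show ?thesis .
qed

lemma prod_roles_eq_powers:
  assumes "finite J" "finite K" "J \<inter> K = {}" "L \<subseteq> K"
  shows "(\<Prod>j\<in>J \<union> K. if j \<in> J then x else if j \<in> L then y else z)
           = x ^ card J * y ^ card L * z ^ (card K - card L)"
proof -
  let ?g = "\<lambda>j. if j \<in> J then x else if j \<in> L then y else z"
  have fL: "finite L" using assms(2,4) by (rule finite_subset[rotated])
  have "prod ?g (J \<union> K) = prod ?g J * (prod ?g (K - L) * prod ?g L)"
    using assms by (simp add: prod.union_disjoint prod.subset_diff[OF assms(4,2)])
  also have "\<dots> = prod (\<lambda>_. x) J * (prod (\<lambda>_. z) (K - L) * prod (\<lambda>_. y) L)"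
    using assms(3,4) by (intro arg_cong2[where f = "(*)"] prod.cong) auto
  finally show ?thesis using card_Diff_subset[OF fL assms(4)] by (simp add: mult_ac)
qed

definition blockwise ::
  "(('k \<Rightarrow> bool) \<Rightarrow> ('k \<Rightarrow> bool) \<Rightarrow> bool) \<Rightarrow> (('k \<Rightarrow> bool) \<Rightarrow> ('k \<Rightarrow> bool) \<Rightarrow> bool) \<Rightarrow>
   ('j \<times> 'k \<Rightarrow> bool) \<times> ('j \<times> 'k \<Rightarrow> bool) \<Rightarrow> ('j \<Rightarrow> bool) \<times> ('j \<Rightarrow> bool)" where
  "blockwise U V w = (\<lambda>j. case_prod U (block_restr j w), \<lambda>j. case_prod V (block_restr j w))"

theorem quasi_indep_blockwise:
  fixes P :: "(('j \<times> 'k \<Rightarrow> bool) \<times> ('j \<times> 'k \<Rightarrow> bool)) pmf"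
  assumes qi: "quasi_indep (S \<times> Q) P f df dnf" and "finite S" "finite Q"
    and "finite EJ" "finite EK" "finite EL"
    and "\<forall>p \<in> EJ \<union> EK \<union> EL. admissible_pattern Q p"
    and cover_J: "\<And>u v. U u v \<Longrightarrow> \<not> V u v \<Longrightarrow> \<exists>p\<in>EJ. (u, v) \<in> pattern_event p"
    and cover_K: "\<And>u v. V u v \<Longrightarrow> \<exists>p\<in>EK. (u, v) \<in> pattern_event p"
    and cover_L: "\<And>u v. U u v \<Longrightarrow> V u v \<Longrightarrow> \<exists>p\<in>EL. (u, v) \<in> pattern_event p"
  shows "quasi_indep S (map_pmf (blockwise U V) P)
           (sum (pattern_bound f df dnf) EK) (sum (pattern_bound f df dnf) EL)
           (sum (pattern_bound f df dnf) EJ)"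
  unfolding quasi_indep_iff
proof (intro allI impI)
  let ?w = "sum (pattern_bound f df dnf)"
  fix p :: "'j pattern"
  assume "admissible_pattern S p"
  then obtain J K L where p: "p = (J, K, L)" and "J \<subseteq> S" "K \<subseteq> S" "J \<inter> K = {}" "L \<subseteq> K"
    by (cases p) (auto simp: admissible_pattern_def)
  then have "finite J" "finite K" using \<open>finite S\<close> by (meson finite_subset)+
  define E where "E j = (if j \<in> J then EJ else if j \<in> L then EL else EK)" for j
  have "blockwise U V -` pattern_event p
      \<subseteq> {w. \<forall>j\<in>J \<union> K. \<exists>p\<in>E j. block_restr j w \<in> pattern_event p}"
  proof (intro subsetI CollectI ballI)
    fix w j
    assume w: "w \<in> blockwise U V -` pattern_event p" and j: "j \<in> J \<union> K"
    obtain uj vj where wj: "block_restr j w = (uj, vj)" by fastforce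
    have "j \<in> J \<Longrightarrow> U uj vj \<and> \<not> V uj vj" "j \<in> K \<Longrightarrow> V uj vj" "j \<in> L \<Longrightarrow> U uj vj"
      using w wj by (force simp: p blockwise_def pattern_event_iff)+
    then show "\<exists>p\<in>E j. block_restr j w \<in> pattern_event p"
      using j cover_J cover_K cover_L \<open>L \<subseteq> K\<close> unfolding E_def wj by auto
  qed
  then have "measure_pmf.prob (map_pmf (blockwise U V) P) (pattern_event p)
      \<le> measure_pmf.prob P {w. \<forall>j\<in>J \<union> K. \<exists>p\<in>E j. block_restr j w \<in> pattern_event p}"
    by (simp add: measure_pmf.finite_measure_mono)
  also have "\<dots> \<le> (\<Prod>j\<in>J \<union> K. ?w (E j))"
    using qi \<open>finite J\<close> \<open>finite K\<close> \<open>J \<subseteq> S\<close> \<open>K \<subseteq> S\<close> \<open>finite Q\<close> assms(4-7)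
    by (intro prob_blockwise_patterns_le) (auto simp: E_def split: if_split_asm)
  also have "\<dots> = (\<Prod>j\<in>J \<union> K. if j \<in> J then ?w EJ else if j \<in> L then ?w EL else ?w EK)"
    by (intro prod.cong) (simp_all add: E_def)
  also have "\<dots> = pattern_bound (?w EK) (?w EL) (?w EJ) p"
    using \<open>finite J\<close> \<open>finite K\<close> \<open>J \<inter> K = {}\<close> \<open>L \<subseteq> K\<close>
    by (simp add: prod_roles_eq_powers p pattern_bound_def)
  finally show "measure_pmf.prob (map_pmf (blockwise U V) P) (pattern_event p) \<le> \<dots>" .
qed

lemma card_filter_eq_sum: "finite A \<Longrightarrow> card {i \<in> A. P i} = (\<Sum>i\<in>A. of_bool (P i))"
  by (simp add: Int_def)

lemma Collect_mem_insert_conj: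
  "{i \<in> insert a A. P i} = (if P a then insert a {i \<in> A. P i} else {i \<in> A. P i})"
  by auto

lemma atLeastAtMost_1_4: "{1..4::nat} = {1, 2, 3, 4}"
  by (auto simp: eval_nat_numeral)

lemma blk_syn_iff: "blk_syn u \<longleftrightarrow> u 1 \<noteq> (u 2 \<noteq> (u 3 \<noteq> u 4))"
  unfolding blk_syn_def atLeastAtMost_1_4
  by (subst card_filter_eq_sum) (simp_all del: sum_of_bool_eq)

lemma blk_corr_iff:
  "blk_corr u v i \<longleftrightarrow>
     blk_syn u \<and>
     i = (if v 1 then 1 else if v 2 then 2 else if v 3 then 3 else if v 4 then 4 else 1)"
  unfolding blk_corr_def blk_flags_def atLeastAtMost_1_4 Collect_mem_insert_conj
  by (cases "v 1"; cases "v 2"; cases "v 3"; cases "v 4") simp_all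

lemma blk_U_iff:
  "\<alpha> \<noteq> 1 \<Longrightarrow> blk_U \<alpha> u v \<longleftrightarrow> (u 1 \<noteq> blk_corr u v 1) \<noteq> (u \<alpha> \<noteq> blk_corr u v \<alpha>)"
  unfolding blk_U_def by (subst card_filter_eq_sum) (simp_all del: sum_of_bool_eq)

(* A single flag needs no clause of its own: it cannot meet both {1, \<alpha>} and its complement. *)
lemma blk_V_iff:
  assumes "\<alpha> \<in> {2, 3}"
  shows "blk_V \<alpha> u v \<longleftrightarrow>
    (\<not> v 1 \<and> \<not> v 2 \<and> \<not> v 3 \<and> \<not> v 4 \<and> blk_syn u) \<or>
    (v 1 \<or> v \<alpha>) \<and> (v (if \<alpha> = 2 then 3 else 2) \<or> v 4)"
  using assms unfolding blk_V_def Let_def blk_flags_def atLeastAtMost_1_4 Collect_mem_insert_conj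
  by (cases "v 1"; cases "v 2"; cases "v 3"; cases "v 4") auto

(* With \<beta> the element of {2, 3} other than \<alpha>, the lists [1, \<alpha>] and [\<beta>, 4] enumerate A and B. *)
definition unflagged_error_patterns :: "nat \<Rightarrow> nat pattern list" where
  "unflagged_error_patterns \<alpha> = (let \<beta> = if \<alpha> = 2 then 3 else 2 in
     [p. a \<leftarrow> [1, \<alpha>], b \<leftarrow> [\<beta>, 4], p \<leftarrow> [({a, b}, {}, {}), ({a}, {b}, {}), ({b}, {a}, {})]])"

definition flagged_patterns :: "nat \<Rightarrow> nat pattern list" where
  "flagged_patterns \<alpha> = (let \<beta> = if \<alpha> = 2 then 3 else 2 in
     [({}, {a, b}, {}). a \<leftarrow> [1, \<alpha>], b \<leftarrow> [\<beta>, 4]] @ [({i}, {}, {}). i \<leftarrow> [1, 2, 3, 4]])"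

(* The decoder corrects the smallest flag, so a flagged pair keeps its error on the larger bit;
   for \<alpha> = 3 the smallest flag can be bit 2, in B, leaving an unflagged error on bit 1. *)
definition flagged_error_patterns :: "nat \<Rightarrow> nat pattern list" where
  "flagged_error_patterns \<alpha> = (let \<beta> = if \<alpha> = 2 then 3 else 2 in
     [({b}, {}, {}). b \<leftarrow> [\<beta>, 4]] @
     [({}, {a, b}, {max a b}). a \<leftarrow> [1, \<alpha>], b \<leftarrow> [\<beta>, 4]] @
     (if \<alpha> = 3 then [({1}, {2, 3}, {})] else []))"

lemma unflagged_error_patterns_cover:
  assumes "\<alpha> \<in> {2, 3}" "blk_U \<alpha> u v" "\<not> blk_V \<alpha> u v"
  shows "\<exists>p\<in>set (unflagged_error_patterns \<alpha>). (u, v) \<in> pattern_event p"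
proof -
  have "\<alpha> \<noteq> 1" and \<alpha>: "\<alpha> = 2 \<or> \<alpha> = 3" using assms(1) by auto
  show ?thesis
    using \<alpha> assms(2-)
    unfolding blk_U_iff[OF \<open>\<alpha> \<noteq> 1\<close>] blk_V_iff[OF assms(1)] blk_corr_iff blk_syn_iff
      unflagged_error_patterns_def
    by (elim disjE; simp add: pattern_event_iff Let_def max_def split: if_split_asm; smt)
qed

lemma flagged_patterns_cover:
  assumes "\<alpha> \<in> {2, 3}" "blk_V \<alpha> u v"
  shows "\<exists>p\<in>set (flagged_patterns \<alpha>). (u, v) \<in> pattern_event p"
proof -
  have "\<alpha> = 2 \<or> \<alpha> = 3" using assms(1) by auto
  then show ?thesis
    using assms(2) unfolding blk_V_iff[OF assms(1)] blk_syn_iff flagged_patterns_def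
    by (elim disjE; simp add: pattern_event_iff Let_def split: if_split_asm; smt)
qed

lemma flagged_error_patterns_cover:
  assumes "\<alpha> \<in> {2, 3}" "blk_U \<alpha> u v" "blk_V \<alpha> u v"
  shows "\<exists>p\<in>set (flagged_error_patterns \<alpha>). (u, v) \<in> pattern_event p"
proof -
  have "\<alpha> \<noteq> 1" and \<alpha>: "\<alpha> = 2 \<or> \<alpha> = 3" using assms(1) by auto
  show ?thesis
    using \<alpha> assms(2-)
    unfolding blk_U_iff[OF \<open>\<alpha> \<noteq> 1\<close>] blk_V_iff[OF assms(1)] blk_corr_iff blk_syn_iff
      flagged_error_patterns_def
    by (elim disjE; simp add: pattern_event_iff Let_def max_def split: if_split_asm; smt)
qed

lemma sum_set_le_sum_list:
  fixes g :: "'a \<Rightarrow> 'b::ordered_comm_monoid_add"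
  assumes "\<And>x. x \<in> set xs \<Longrightarrow> 0 \<le> g x"
  shows "sum g (set xs) \<le> sum_list (map g xs)"
  using assms
proof (induction xs)
  case (Cons x xs)
  then have "sum g (set (x # xs)) \<le> g x + sum g (set xs)"
    by (cases "x \<in> set xs") (simp_all add: insert_absorb add_increasing)
  also have "\<dots> \<le> g x + sum_list (map g xs)"
    using Cons by (simp add: add_left_mono)
  finally show ?case by simp
qed simp

lemma patterns_admissible:
  assumes "\<alpha> \<in> {2, 3}"
  shows "\<forall>p \<in> set (unflagged_error_patterns \<alpha>) \<union> set (flagged_patterns \<alpha>)
             \<union> set (flagged_error_patterns \<alpha>). admissible_pattern {1..4} p"
  using assms
  by (auto simp: unflagged_error_patterns_def flagged_patterns_def flagged_error_patterns_def
      admissible_pattern_def atLeastAtMost_1_4 Let_def max_def)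

lemma unflagged_error_patterns_weight:
  "\<alpha> \<in> {2, 3} \<Longrightarrow>
     sum_list (map (pattern_bound f df dnf) (unflagged_error_patterns \<alpha>))
       = 4 * dnf ^ 2 + 8 * f * dnf"
  by (auto simp: unflagged_error_patterns_def pattern_bound_def power2_eq_square)

lemma flagged_patterns_weight:
  "\<alpha> \<in> {2, 3} \<Longrightarrow>
     sum_list (map (pattern_bound f df dnf) (flagged_patterns \<alpha>)) = 4 * dnf + 4 * f ^ 2"
  by (auto simp: flagged_patterns_def pattern_bound_def power2_eq_square)

lemma flagged_error_patterns_weight:
  "\<alpha> \<in> {2, 3} \<Longrightarrow>
     sum_list (map (pattern_bound f df dnf) (flagged_error_patterns \<alpha>))
       = 2 * dnf + 4 * f * df + of_bool (\<alpha> = 3) * f ^ 2 * dnf"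
  by (auto simp: flagged_error_patterns_def pattern_bound_def power2_eq_square max_def)

lemma flagged_error_patterns_weight_le:
  assumes "\<alpha> \<in> {2, 3}" "0 \<le> f" "0 \<le> df" "0 \<le> dnf"
  shows "sum_list (map (pattern_bound f df dnf) (flagged_error_patterns \<alpha>))
           \<le> 2 * dnf + 4 * f * df + 4 * f ^ 2 * (2 * dnf + 3 * df)"
proof -
  have "0 \<le> f ^ 2 * dnf" "0 \<le> f ^ 2 * df" using assms(2-) by simp_all
  moreover have "of_bool (\<alpha> = 3) * f ^ 2 * dnf \<le> f ^ 2 * dnf"
    using \<open>0 \<le> f ^ 2 * dnf\<close> by (cases "\<alpha> = 3") simp_all
  moreover have "4 * f ^ 2 * (2 * dnf + 3 * df) = 8 * (f ^ 2 * dnf) + 12 * (f ^ 2 * df)"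
    by (simp add: algebra_simps)
  ultimately show ?thesis
    using flagged_error_patterns_weight[OF assms(1), of f df dnf] by linarith
qed

lemma out_pmf_eq_blockwise: "out_pmf \<alpha> P = map_pmf (blockwise (blk_U \<alpha>) (blk_V \<alpha>)) P"
  unfolding out_pmf_def
  by (rule arg_cong[where f = "\<lambda>g. map_pmf g P"])
    (auto simp: blockwise_def block_restr_def fun_eq_iff)

theorem mainTheorem1:
  fixes m \<alpha> :: nat
    and P :: "((nat \<times> nat \<Rightarrow> bool) \<times> (nat \<times> nat \<Rightarrow> bool)) pmf"
    and f df dnf :: real
  assumes "m \<ge> 1"
    and "\<alpha> \<in> {2, 3}"
    and "quasi_indep ({..<m} \<times> {1..4}) P f df dnf"
  shows "quasi_indep {..<m} (out_pmf \<alpha> P)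
           (4 * dnf + 4 * f ^ 2)
           (2 * dnf + 4 * f * df + 4 * f ^ 2 * (2 * dnf + 3 * df))
           (4 * dnf ^ 2 + 8 * f * dnf)"
proof -
  have "(0, 1) \<in> {..<m} \<times> {1..4::nat}" using assms(1) by simp
  note nonneg = quasi_indep_nonneg[OF assms(3) this]
  let ?w = "\<lambda>ps. sum (pattern_bound f df dnf) (set ps)"
  have w_nonneg: "0 \<le> ?w ps" for ps :: "nat pattern list"
    using nonneg by (simp add: sum_nonneg pattern_bound_nonneg)
  have w_le: "?w ps \<le> sum_list (map (pattern_bound f df dnf) ps)" for ps :: "nat pattern list"
    using nonneg by (simp add: sum_set_le_sum_list pattern_bound_nonneg)
  have "quasi_indep {..<m} (out_pmf \<alpha> P) (?w (flagged_patterns \<alpha>))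
          (?w (flagged_error_patterns \<alpha>)) (?w (unflagged_error_patterns \<alpha>))"
    unfolding out_pmf_eq_blockwise
    using assms(3) patterns_admissible[OF assms(2)]
      unflagged_error_patterns_cover[OF assms(2)] flagged_patterns_cover[OF assms(2)]
      flagged_error_patterns_cover[OF assms(2)]
    by (intro quasi_indep_blockwise) auto
  then show ?thesis
  proof (rule quasi_indep_mono[OF _ w_nonneg w_nonneg w_nonneg])
    show "?w (flagged_patterns \<alpha>) \<le> 4 * dnf + 4 * f ^ 2"
      using w_le flagged_patterns_weight[OF assms(2)] by metis
    show "?w (unflagged_error_patterns \<alpha>) \<le> 4 * dnf ^ 2 + 8 * f * dnf"
      using w_le unflagged_error_patterns_weight[OF assms(2)] by metis
    show "?w (flagged_error_patterns \<alpha>)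
        \<le> 2 * dnf + 4 * f * df + 4 * f ^ 2 * (2 * dnf + 3 * df)"
      using w_le flagged_error_patterns_weight_le[OF assms(2) nonneg] by (rule order_trans)
  qed
qed

end
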